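(* Let $j,k\ge 1$ be integers, $\beta,\gamma,\nu>0$, $R_0=\beta/\gamma>1$. For $\boldsymbol{y},\boldsymbol{\theta}\in\mathbb{R}^{j+k}$ define $$H_{j,k}(\boldsymbol{y},\boldsymbol{\theta})=\beta\Big(\sum_{m=j+1}^{j+k}y_m\Big)\Big(1-\sum_{m=1}^{j+k}y_m\Big)\big(e^{\theta_1}-1\big)+j\nu\sum_{m=1}^{j}y_m\big(e^{-\theta_m+\theta_{m+1}}-1\big)+k\gamma\sum_{m=j+1}^{j+k-1}y_m\big(e^{-\theta_m+\theta_{m+1}}-1\big)+k\gamma\,y_{j+k}\big(e^{-\theta_{j+k}}-1\big).$$ Define $\tilde S(\boldsymbol{\theta})=\ln\Big(\frac1k\sum_{m=j+1}^{j+k}e^{\theta_m}\Big)-\frac{\gamma}{\beta}\Big(1-\frac{k}{\sum_{m=j+1}^{j+k}e^{\theta_m}}\Big)$ (a function of $\theta_{j+1},\dots,\theta_{j+k}$ only). Let $\theta_k^*$ be the unique real solution of $\frac{\beta}{k\gamma}\sum_{m=1}^k e^{m\theta}=1$ and let $\boldsymbol{\theta}^*\in\mathbb{R}^{j+k}$ have $\theta^*_1=\dots=\theta^*_{j+1}=k\theta_k^*$ and $\theta^*_{j+i}=(k-i+1)\theta_k^*$ for $i=1,\dots,k$. Then: (i) for every $\boldsymbol{\theta}\in\mathbb{R}^{j+k}$ with $\theta_1=\theta_2=\cdots=\theta_{j+1}$, $H_{j,k}\big(\nabla\tilde S(\boldsymbol{\theta}),\boldsymbol{\theta}\big)=0$;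 (ii) $(\mathbf{0},\boldsymbol{\theta}^* )$ is an equilibrium point of the Hamiltonian system $dy_i/dt=\partial H_{j,k}/\partial\theta_i$, $d\theta_i/dt=-\partial H_{j,k}/\partial y_i$ ($i=1,\dots,j+k$); (iii) $\tilde S(\boldsymbol{\theta}^* )-\tilde S(\mathbf{0})=1-\frac1{R_0}-\ln R_0$.
   Context: $H_{j,k}$ is the Hamiltonian for an SEIS infection model with $j$ latent stages (each of mean duration $1/(j\nu)$) followed by $k$ infectious stages (each of mean duration $1/(k\gamma)$); $y_1,\dots,y_j$ correspond to latent stages and $y_{j+1},\dots,y_{j+k}$ to infectious stages, and $\theta_i$ is the momentum conjugate to $y_i$. $\nabla\tilde S$ denotes the gradient with respect to all $j+k$ components of $\boldsymbol\theta$. *)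

theory Defs
  imports "HOL-Analysis.Analysis"
begin

text \<open>Vectors in R^(j+k) are represented as functions nat => real, using the
components with indices 1..j+k; other components are ignored.\<close>

definition H :: "nat \<Rightarrow> nat \<Rightarrow> real \<Rightarrow> real \<Rightarrow> real \<Rightarrow> (nat \<Rightarrow> real) \<Rightarrow> (nat \<Rightarrow> real) \<Rightarrow> real" where
  "H j k \<beta> \<gamma> \<nu> y \<theta> =
     \<beta> * (\<Sum>m=j+1..j+k. y m) * (1 - (\<Sum>m=1..j+k. y m)) * (exp (\<theta> 1) - 1)
   + real j * \<nu> * (\<Sum>m=1..j. y m * (exp (- \<theta> m + \<theta> (m+1)) - 1))
   + real k * \<gamma> * (\<Sum>m=j+1..j+k-1. y m * (exp (- \<theta> m + \<theta> (m+1)) - 1))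
   + real k * \<gamma> * y (j+k) * (exp (- \<theta> (j+k)) - 1)"

definition S_tilde :: "nat \<Rightarrow> nat \<Rightarrow> real \<Rightarrow> real \<Rightarrow> (nat \<Rightarrow> real) \<Rightarrow> real" where
  "S_tilde j k \<beta> \<gamma> \<theta> =
     ln ((1 / real k) * (\<Sum>m=j+1..j+k. exp (\<theta> m)))
     - (\<gamma> / \<beta>) * (1 - real k / (\<Sum>m=j+1..j+k. exp (\<theta> m)))"

definition partial :: "((nat \<Rightarrow> real) \<Rightarrow> real) \<Rightarrow> nat \<Rightarrow> (nat \<Rightarrow> real) \<Rightarrow> real" where
  "partial f i x = deriv (\<lambda>t. f (x(i := t))) (x i)"

definition grad :: "nat \<Rightarrow> ((nat \<Rightarrow> real) \<Rightarrow> real) \<Rightarrow> (nat \<Rightarrow> real) \<Rightarrow> (nat \<Rightarrow> real)" where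
  "grad n f x = (\<lambda>i. if 1 \<le> i \<and> i \<le> n then partial f i x else 0)"

definition theta_k_star :: "nat \<Rightarrow> real \<Rightarrow> real \<Rightarrow> real" where
  "theta_k_star k \<beta> \<gamma> = (THE \<theta>. \<beta> / (real k * \<gamma>) * (\<Sum>m=1..k. exp (real m * \<theta>)) = 1)"

definition theta_star :: "nat \<Rightarrow> nat \<Rightarrow> real \<Rightarrow> real \<Rightarrow> (nat \<Rightarrow> real)" where
  "theta_star j k \<beta> \<gamma> = (\<lambda>i.
     if 1 \<le> i \<and> i \<le> j + 1 then real k * theta_k_star k \<beta> \<gamma>
     else if j + 1 < i \<and> i \<le> j + k then real (k - (i - j) + 1) * theta_k_star k \<beta> \<gamma>
     else 0)"

end

theory Submission
  imports Defs
begin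

(*
  Write s for the sum of exp theta_m over the infectious stages. The gradient of S_tilde
  vanishes in the latent directions and equals c * exp theta_m in the infectious ones, with
  c = 1/s - k gamma/(beta s^2). Substituted into H, the transfer terms along the infectious
  chain telescope, and the infection term cancels what is left because
  beta cs (1 - cs) = k gamma c and theta_1 = theta_(j+1).

  At y = 0 the Hamiltonian vanishes for every theta, and along a coordinate direction y_i it
  is t(1 - t) A + t B; at theta* the derivative A + B vanishes because, summing the geometric
  series, the defining equation of theta*_k is equivalent to
  beta (exp (k theta*_k) - 1) + k gamma (exp (- theta*_k) - 1) = 0. The same equation gives
  sum_m exp theta*_m = k gamma/beta, and evaluating S_tilde there gives (iii).

  The root theta*_k exists for all beta, gamma > 0.
*)

lemma strict_mono_sum_exp_mult:
  assumes "k \<ge> 1"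
  shows "strict_mono (\<lambda>\<theta>::real. \<Sum>m=1..k. exp (real m * \<theta>))"
proof (rule strict_monoI, rule sum_strict_mono)
  fix a b :: real and m assume "a < b" "m \<in> {1..k}"
  then show "exp (real m * a) < exp (real m * b)" by simp
qed (use assms in auto)

lemma ex1_sum_exp_mult_eq:
  assumes "k \<ge> 1" "c > 0"
  shows "\<exists>!\<theta>::real. (\<Sum>m=1..k. exp (real m * \<theta>)) = c"
proof -
  define f where "f = (\<lambda>\<theta>::real. \<Sum>m=1..k. exp (real m * \<theta>))"
  define a where "a = - \<bar>ln (c / real k)\<bar>"
  define b where "b = \<bar>ln c\<bar>"
  have "f a \<le> (\<Sum>m=1..k. exp a)"
    unfolding f_def by (rule sum_mono) (simp add: a_def mult_le_cancel_right1)
  also have "\<dots> = real k * exp a" by simp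
  also have "\<dots> \<le> c"
    using assms exp_le_cancel_iff[of a "ln (c / real k)"] by (simp add: a_def field_simps)
  finally have fa: "f a \<le> c" .
  have "c \<le> exp b" using assms exp_le_cancel_iff[of "ln c" b] by (simp add: b_def)
  also have "\<dots> \<le> f b"
    unfolding f_def using assms member_le_sum[of 1 "{1..k}" "\<lambda>m. exp (real m * b)"] by simp
  finally have fb: "c \<le> f b" .
  have "a \<le> b" by (simp add: a_def b_def)
  moreover have "continuous_on {a..b} f" unfolding f_def by (intro continuous_intros)
  ultimately obtain \<theta> where "f \<theta> = c" using IVT'[of f a c b] fa fb by auto
  moreover have "inj f" using strict_mono_sum_exp_mult[OF assms(1)] strict_mono_imp_inj_on
    unfolding f_def by blast
  ultimately show ?thesis unfolding f_def by (metis injD)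
qed

lemma theta_k_star_eq:
  assumes "k \<ge> 1" "\<beta> > 0" "\<gamma> > 0"
  shows "(\<Sum>m=1..k. exp (real m * theta_k_star k \<beta> \<gamma>)) = real k * \<gamma> / \<beta>"
proof -
  have eq_iff: "\<beta> / (real k * \<gamma>) * s = 1 \<longleftrightarrow> s = real k * \<gamma> / \<beta>" for s :: real
    using assms by (auto simp: field_simps)
  have "\<exists>!\<theta>. \<beta> / (real k * \<gamma>) * (\<Sum>m=1..k. exp (real m * \<theta>)) = 1"
    unfolding eq_iff using assms by (intro ex1_sum_exp_mult_eq) auto
  then show ?thesis
    unfolding theta_k_star_def eq_iff[symmetric] by (rule theI')
qed

lemma sum_power_div_diff:
  fixes x :: "'a::field"
  assumes "x \<noteq> 0"
  shows "(\<Sum>m=1..k. x ^ m) / x - (\<Sum>m=1..k. x ^ m) = 1 - x ^ k"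
proof -
  have "(\<Sum>m=1..k. x ^ m) = x * (\<Sum>m<k. x ^ m)"
    by (induction k) (simp_all add: sum.cl_ivl_Suc algebra_simps)
  moreover have "(\<Sum>m<k. x ^ m) - (\<Sum>m=1..k. x ^ m) = 1 - x ^ k"
    by (induction k) (simp_all add: sum.cl_ivl_Suc algebra_simps)
  ultimately show ?thesis using assms by simp
qed

lemma theta_k_star_balance:
  assumes "k \<ge> 1" "\<beta> > 0" "\<gamma> > 0"
  defines "T \<equiv> theta_k_star k \<beta> \<gamma>"
  shows "\<beta> * (exp (real k * T) - 1) + real k * \<gamma> * (exp (- T) - 1) = 0"
proof -
  define x where "x = exp T"
  have powers: "exp (real m * T) = x ^ m" for m
    unfolding x_def by (simp add: exp_of_nat_mult)
  have "(\<Sum>m=1..k. x ^ m) = real k * \<gamma> / \<beta>"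
    using theta_k_star_eq[OF assms(1-3)] by (simp add: T_def powers[symmetric])
  then have "real k * \<gamma> = \<beta> * (\<Sum>m=1..k. x ^ m)"
    using assms(2) by simp
  moreover have "exp (- T) = 1 / x" by (simp add: x_def exp_minus inverse_eq_divide)
  moreover have "x \<noteq> 0" by (simp add: x_def)
  ultimately have "\<beta> * (exp (real k * T) - 1) + real k * \<gamma> * (exp (- T) - 1)
      = \<beta> * (x ^ k - 1 + ((\<Sum>m=1..k. x ^ m) / x - (\<Sum>m=1..k. x ^ m)))"
    unfolding powers[of k] by (simp add: algebra_simps)
  also have "\<dots> = 0" unfolding sum_power_div_diff[OF \<open>x \<noteq> 0\<close>] by simp
  finally show ?thesis .
qed

lemma theta_star_latent:
  "i \<in> {1..j+1} \<Longrightarrow> theta_star j k \<beta> \<gamma> i = real k * theta_k_star k \<beta> \<gamma>"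
  unfolding theta_star_def by auto

lemma theta_star_infectious:
  "i \<in> {j+1..j+k} \<Longrightarrow> theta_star j k \<beta> \<gamma> i = real (j+k+1-i) * theta_k_star k \<beta> \<gamma>"
  unfolding theta_star_def by auto

lemma sum_exp_theta_star:
  assumes "k \<ge> 1" "\<beta> > 0" "\<gamma> > 0"
  shows "(\<Sum>m=j+1..j+k. exp (theta_star j k \<beta> \<gamma> m)) = real k * \<gamma> / \<beta>"
proof -
  have "(\<Sum>m=j+1..j+k. exp (theta_star j k \<beta> \<gamma> m))
      = (\<Sum>m=j+1..j+k. exp (real (j+k+1-m) * theta_k_star k \<beta> \<gamma>))"
    by (intro sum.cong refl) (simp add: theta_star_infectious)
  also have "\<dots> = (\<Sum>m=1..k. exp (real m * theta_k_star k \<beta> \<gamma>))"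
    by (rule sum.reindex_bij_witness[of _ "\<lambda>m. j+k+1-m" "\<lambda>m. j+k+1-m"]) auto
  finally show ?thesis using theta_k_star_eq[OF assms] by simp
qed

lemma S_tilde_zero: "k \<ge> 1 \<Longrightarrow> S_tilde j k \<beta> \<gamma> (\<lambda>_. 0) = 0"
  unfolding S_tilde_def by simp

lemma S_tilde_theta_star:
  assumes "k \<ge> 1" "\<beta> > 0" "\<gamma> > 0"
  shows "S_tilde j k \<beta> \<gamma> (theta_star j k \<beta> \<gamma>) = 1 - \<gamma> / \<beta> - ln (\<beta> / \<gamma>)"
proof -
  have "ln (1 / real k * (real k * \<gamma> / \<beta>)) = - ln (\<beta> / \<gamma>)"
    using assms by (simp add: ln_div)
  then show ?thesis
    using assms unfolding S_tilde_def sum_exp_theta_star[OF assms] by (simp add: field_simps)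
qed

lemma has_real_derivative_S_tilde_profile:
  fixes v :: "real \<Rightarrow> real" and k \<beta> \<gamma> :: real
  assumes "(v has_real_derivative v') (at x)" "v x > 0" "k > 0" "\<beta> > 0"
  shows "((\<lambda>t. ln (1 / k * v t) - \<gamma> / \<beta> * (1 - k / v t))
      has_real_derivative (1 / v x - \<gamma> * k / (\<beta> * (v x)\<^sup>2)) * v') (at x)"
  using assms by (auto intro!: derivative_eq_intros simp: field_simps power2_eq_square)

lemma grad_S_tilde:
  fixes j k :: nat and \<theta> :: "nat \<Rightarrow> real"
  assumes "k \<ge> 1" "\<beta> > 0"
  defines "s \<equiv> \<Sum>m=j+1..j+k. exp (\<theta> m)"
  shows "grad (j+k) (S_tilde j k \<beta> \<gamma>) \<theta> i =
    (if i \<in> {j+1..j+k} then (1 / s - \<gamma> * real k / (\<beta> * s\<^sup>2)) * exp (\<theta> i) else 0)"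
proof (cases "i \<in> {j+1..j+k}")
  case True
  define R where "R = (\<Sum>m\<in>{j+1..j+k}-{i}. exp (\<theta> m))"
  have sum_upd: "(\<Sum>m=j+1..j+k. exp ((\<theta>(i := t)) m)) = exp t + R" for t
  proof -
    have "(\<Sum>m=j+1..j+k. exp ((\<theta>(i := t)) m)) = exp t + (\<Sum>m\<in>{j+1..j+k}-{i}. exp ((\<theta>(i := t)) m))"
      using True by (simp add: sum.remove)
    also have "(\<Sum>m\<in>{j+1..j+k}-{i}. exp ((\<theta>(i := t)) m)) = R"
      unfolding R_def by (intro sum.cong) auto
    finally show ?thesis .
  qed
  have "R \<ge> 0" unfolding R_def by (intro sum_nonneg) simp
  have "s = exp (\<theta> i) + R" using sum_upd[of "\<theta> i"] by (simp add: s_def)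
  have "((\<lambda>t. ln (1 / real k * (exp t + R)) - \<gamma> / \<beta> * (1 - real k / (exp t + R)))
      has_real_derivative (1 / s - \<gamma> * real k / (\<beta> * s\<^sup>2)) * exp (\<theta> i)) (at (\<theta> i))"
    unfolding \<open>s = exp (\<theta> i) + R\<close> using \<open>R \<ge> 0\<close> assms
    by (intro has_real_derivative_S_tilde_profile derivative_eq_intros)
      (auto simp: add_pos_nonneg)
  then have "partial (S_tilde j k \<beta> \<gamma>) i \<theta> = (1 / s - \<gamma> * real k / (\<beta> * s\<^sup>2)) * exp (\<theta> i)"
    unfolding partial_def S_tilde_def sum_upd by (rule DERIV_imp_deriv)
  then show ?thesis unfolding grad_def using True by auto
next
  case False
  then have "(\<Sum>m=j+1..j+k. exp ((\<theta>(i := t)) m)) = s" for t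
    unfolding s_def by (intro sum.cong) auto
  then have "partial (S_tilde j k \<beta> \<gamma>) i \<theta> = 0"
    unfolding partial_def S_tilde_def by simp
  then show ?thesis unfolding grad_def using False by auto
qed

lemma sum_fun_upd_zero:
  "finite A \<Longrightarrow> (\<Sum>m\<in>A. ((\<lambda>_. 0)(i := t)) m) = (if i \<in> A then t else 0)"
  by (simp add: fun_upd_apply sum.delta)

lemma sum_fun_upd_zero_mult:
  fixes g :: "'a \<Rightarrow> 'b::semiring_0"
  shows "finite A \<Longrightarrow> (\<Sum>m\<in>A. ((\<lambda>_. 0)(i := t)) m * g m) = (if i \<in> A then t * g i else 0)"
  by (simp add: fun_upd_apply if_distrib[of "\<lambda>x. x * _"] sum.delta cong: if_cong)

definition H_y_linear_coeff :: "nat \<Rightarrow> nat \<Rightarrow> real \<Rightarrow> real \<Rightarrow> (nat \<Rightarrow> real) \<Rightarrow> nat \<Rightarrow> real" where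
  "H_y_linear_coeff j k \<gamma> \<nu> \<theta> i =
     (if i \<in> {1..j} then real j * \<nu> * (exp (- \<theta> i + \<theta> (i+1)) - 1) else 0)
   + (if i \<in> {j+1..j+k-1} then real k * \<gamma> * (exp (- \<theta> i + \<theta> (i+1)) - 1) else 0)
   + (if i = j+k then real k * \<gamma> * (exp (- \<theta> (j+k)) - 1) else 0)"

lemma H_unit_y:
  assumes "i \<in> {1..j+k}"
  shows "H j k \<beta> \<gamma> \<nu> ((\<lambda>_. 0)(i := t)) \<theta> =
     t * (1 - t) * (if i \<in> {j+1..j+k} then \<beta> * (exp (\<theta> 1) - 1) else 0)
   + t * H_y_linear_coeff j k \<gamma> \<nu> \<theta> i"
  unfolding H_def H_y_linear_coeff_def
    sum_fun_upd_zero[OF finite_atLeastAtMost] sum_fun_upd_zero_mult[OF finite_atLeastAtMost]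
  using assms by (simp add: algebra_simps)

lemma H_zero_y: "H j k \<beta> \<gamma> \<nu> (\<lambda>_. 0) \<theta> = 0"
  by (simp add: H_def)

lemma has_real_derivative_H_unit_y:
  assumes "i \<in> {1..j+k}"
  shows "((\<lambda>t. H j k \<beta> \<gamma> \<nu> ((\<lambda>_. 0)(i := t)) \<theta>) has_real_derivative
      (if i \<in> {j+1..j+k} then \<beta> * (exp (\<theta> 1) - 1) else 0)
    + H_y_linear_coeff j k \<gamma> \<nu> \<theta> i) (at 0)"
  unfolding H_unit_y[OF assms] by (auto intro!: derivative_eq_intros)

lemma H_unit_y_derivative_theta_star_eq_0:
  assumes "k \<ge> 1" "\<beta> > 0" "\<gamma> > 0" "i \<in> {1..j+k}"
  defines "\<theta> \<equiv> theta_star j k \<beta> \<gamma>"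
  shows "(if i \<in> {j+1..j+k} then \<beta> * (exp (\<theta> 1) - 1) else 0)
    + H_y_linear_coeff j k \<gamma> \<nu> \<theta> i = 0"
proof -
  define T where "T = theta_k_star k \<beta> \<gamma>"
  have "\<theta> 1 = real k * T" by (simp add: \<theta>_def T_def theta_star_latent)
  consider "i \<in> {1..j}" | "i \<in> {j+1..j+k-1}" | "i = j+k"
    using assms(4) by fastforce
  then show ?thesis
  proof cases
    case 1
    then have "\<theta> (i+1) = \<theta> i" by (simp add: \<theta>_def theta_star_latent)
    with 1 show ?thesis by (auto simp: H_y_linear_coeff_def)
  next
    case 2
    then have "\<theta> i = real (j+k+1-i) * T" "\<theta> (i+1) = real (j+k+1-(i+1)) * T"
      by (auto simp: \<theta>_def T_def theta_star_infectious)
    moreover have "real (j+k+1-i) = real (j+k+1-(i+1)) + 1" using 2 by auto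
    ultimately have "- \<theta> i + \<theta> (i+1) = - T" by (simp add: algebra_simps)
    with 2 \<open>\<theta> 1 = real k * T\<close> show ?thesis
      using theta_k_star_balance[OF assms(1-3)] by (auto simp: H_y_linear_coeff_def T_def)
  next
    case 3
    then have "\<theta> (j+k) = T" using assms(1) by (simp add: \<theta>_def T_def theta_star_infectious)
    with 3 \<open>\<theta> 1 = real k * T\<close> show ?thesis
      using theta_k_star_balance[OF assms(1-3)] assms(1) by (auto simp: H_y_linear_coeff_def T_def)
  qed
qed

lemma H_exp_profile:
  fixes j k :: nat and y \<theta> :: "nat \<Rightarrow> real"
  assumes "k \<ge> 1"
    and latent: "\<And>m. m \<in> {1..j} \<Longrightarrow> y m = 0"
    and infectious: "\<And>m. m \<in> {j+1..j+k} \<Longrightarrow> y m = c * exp (\<theta> m)"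
  defines "s \<equiv> \<Sum>m=j+1..j+k. exp (\<theta> m)"
  shows "H j k \<beta> \<gamma> \<nu> y \<theta> =
     \<beta> * (c * s) * (1 - c * s) * (exp (\<theta> 1) - 1) + real k * \<gamma> * c * (1 - exp (\<theta> (j+1)))"
proof -
  have infectious_sum: "(\<Sum>m=j+1..j+k. y m) = c * s"
    by (simp add: s_def sum_distrib_left infectious)
  have "(\<Sum>m=1..j+k. y m) = (\<Sum>m=1..j. y m) + (\<Sum>m=j+1..j+k. y m)"
    by (rule sum.ub_add_nat) simp
  then have total_sum: "(\<Sum>m=1..j+k. y m) = c * s"
    using infectious_sum by (simp add: latent)
  have "(\<Sum>m=j+1..j+k-1. y m * (exp (- \<theta> m + \<theta> (m+1)) - 1))
      = (\<Sum>m=j+1..j+k-1. c * exp (\<theta> (Suc m)) - c * exp (\<theta> m))"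
    by (intro sum.cong refl) (auto simp: infectious algebra_simps simp flip: exp_add)
  also have "\<dots> = c * exp (\<theta> (j+k)) - c * exp (\<theta> (j+1))"
    using sum_Suc_diff[of "j+1" "j+k-1" "\<lambda>m. c * exp (\<theta> m)"] assms(1) by simp
  finally have chain: "(\<Sum>m=j+1..j+k-1. y m * (exp (- \<theta> m + \<theta> (m+1)) - 1))
      = c * exp (\<theta> (j+k)) - c * exp (\<theta> (j+1))" .
  have "y (j+k) = c * exp (\<theta> (j+k))" using assms(1) by (intro infectious) simp
  then have recovery: "y (j+k) * (exp (- \<theta> (j+k)) - 1) = c * (1 - exp (\<theta> (j+k)))"
    by (simp add: algebra_simps exp_minus)
  show ?thesis
    unfolding H_def infectious_sum total_sum chain mult.assoc[of _ "y (j+k)"] recovery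
    by (simp add: latent algebra_simps)
qed

lemma H_grad_S_tilde_eq_0:
  assumes "k \<ge> 1" "\<beta> > 0" "\<theta> (j+1) = \<theta> 1"
  shows "H j k \<beta> \<gamma> \<nu> (grad (j+k) (S_tilde j k \<beta> \<gamma>) \<theta>) \<theta> = 0"
proof -
  define s where "s = (\<Sum>m=j+1..j+k. exp (\<theta> m))"
  define c where "c = 1 / s - \<gamma> * real k / (\<beta> * s\<^sup>2)"
  have "s > 0" unfolding s_def using assms(1) by (intro sum_pos) auto
  have "H j k \<beta> \<gamma> \<nu> (grad (j+k) (S_tilde j k \<beta> \<gamma>) \<theta>) \<theta>
      = \<beta> * (c * s) * (1 - c * s) * (exp (\<theta> 1) - 1) + real k * \<gamma> * c * (1 - exp (\<theta> (j+1)))"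
    unfolding s_def
    by (rule H_exp_profile) (use assms(1) in \<open>auto simp: grad_S_tilde[OF assms(1,2)] c_def s_def\<close>)
  also have "\<beta> * (c * s) * (1 - c * s) = real k * \<gamma> * c"
    unfolding c_def using \<open>s > 0\<close> assms(2) by (simp add: field_simps power2_eq_square)
  finally show ?thesis using assms(3) by (simp add: algebra_simps)
qed

theorem mainTheorem3:
  fixes j k :: nat and \<beta> \<gamma> \<nu> :: real
  assumes "j \<ge> 1" "k \<ge> 1" "\<beta> > 0" "\<gamma> > 0" "\<nu> > 0" "\<beta> / \<gamma> > 1"
  shows "(\<forall>\<theta> :: nat \<Rightarrow> real. (\<forall>i\<in>{1..j+1}. \<theta> i = \<theta> 1) \<longrightarrow>
            H j k \<beta> \<gamma> \<nu> (grad (j+k) (S_tilde j k \<beta> \<gamma>) \<theta>) \<theta> = 0)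
       \<and> (\<forall>i\<in>{1..j+k}.
            ((\<lambda>t. H j k \<beta> \<gamma> \<nu> ((\<lambda>_. 0)(i := t)) (theta_star j k \<beta> \<gamma>)) has_real_derivative 0) (at 0)
          \<and> ((\<lambda>t. H j k \<beta> \<gamma> \<nu> (\<lambda>_. 0) ((theta_star j k \<beta> \<gamma>)(i := t))) has_real_derivative 0)
               (at (theta_star j k \<beta> \<gamma> i)))
       \<and> S_tilde j k \<beta> \<gamma> (theta_star j k \<beta> \<gamma>) - S_tilde j k \<beta> \<gamma> (\<lambda>_. 0)
           = 1 - 1 / (\<beta> / \<gamma>) - ln (\<beta> / \<gamma>)"
proof (intro conjI allI impI ballI)
  fix \<theta> :: "nat \<Rightarrow> real"
  assume "\<forall>i\<in>{1..j+1}. \<theta> i = \<theta> 1"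
  then have "\<theta> (j+1) = \<theta> 1" by (rule bspec) simp
  then show "H j k \<beta> \<gamma> \<nu> (grad (j+k) (S_tilde j k \<beta> \<gamma>) \<theta>) \<theta> = 0"
    by (rule H_grad_S_tilde_eq_0[OF assms(2,3)])
next
  fix i assume i: "i \<in> {1..j+k}"
  show "((\<lambda>t. H j k \<beta> \<gamma> \<nu> ((\<lambda>_. 0)(i := t)) (theta_star j k \<beta> \<gamma>)) has_real_derivative 0) (at 0)"
    using has_real_derivative_H_unit_y[OF i, where \<theta>="theta_star j k \<beta> \<gamma>" and \<beta>=\<beta> and \<gamma>=\<gamma> and \<nu>=\<nu>]
    unfolding H_unit_y_derivative_theta_star_eq_0[OF assms(2-4) i] .
next
  fix i
  show "((\<lambda>t. H j k \<beta> \<gamma> \<nu> (\<lambda>_. 0) ((theta_star j k \<beta> \<gamma>)(i := t))) has_real_derivative 0)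
      (at (theta_star j k \<beta> \<gamma> i))"
    unfolding H_zero_y by (rule DERIV_const)
next
  show "S_tilde j k \<beta> \<gamma> (theta_star j k \<beta> \<gamma>) - S_tilde j k \<beta> \<gamma> (\<lambda>_. 0)
      = 1 - 1 / (\<beta> / \<gamma>) - ln (\<beta> / \<gamma>)"
    unfolding S_tilde_theta_star[OF assms(2-4)] S_tilde_zero[OF assms(2)] by simp
qed

end
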